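(* Let $R$ be an associative ring with identity, and let $a,b,c,d\in R$ satisfy $bdb=bac$ and $dbd=acd$. If $ac\in R^{qnil}$, then $bd\in R^{qnil}$.
   Context: For $x\in R$, $\mathrm{comm}(x)=\{y\in R : xy=yx\}$. $R^{inv}$ denotes the set of units of $R$. $R^{qnil}=\{x\in R : 1+xy\in R^{inv}\text{ for every } y\in \mathrm{comm}(x)\}$ (the quasinilpotent elements). *)

theory Defs
  imports Main
begin

definition comm :: "'a::ring_1 \<Rightarrow> 'a set" where
  "comm x = {y. x * y = y * x}"

definition Rinv :: "'a::ring_1 set" where
  "Rinv = {x. \<exists>y. x * y = 1 \<and> y * x = 1}"

definition Rqnil :: "'a::ring_1 set" where
  "Rqnil = {x. \<forall>y\<in>comm x. 1 + x * y \<in> Rinv}"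

end

theory Submission
  imports Defs
begin

(* For y commuting with bd, the element w = d y^2 b commutes with ac, so 1 - ac w is a unit.
   Rewriting ac d = d b d gives ac w = d (b d y^2 b), and Jacobson's lemma moves d to the
   right: 1 - (b d y)^2 = (1 + b d y)(1 - b d y) is a unit. The two factors commute, hence
   each is a unit. *)

lemma Rinv_one_plus_mult_commute:
  fixes p q :: "'a::ring_1"
  assumes "1 + p * q \<in> Rinv"
  shows "1 + q * p \<in> Rinv"
proof -
  obtain u where u1: "(1 + p * q) * u = 1" and u2: "u * (1 + p * q) = 1"
    using assms unfolding Rinv_def by blast
  have e1: "u + p * q * u = 1" using u1 by (simp add: algebra_simps)
  have e2: "u + u * p * q = 1" using u2 by (simp add: algebra_simps mult.assoc)
  have "(1 + q * p) * (1 - q * u * p) = 1 + q * p - q * (u + p * q * u) * p"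
    by (simp add: algebra_simps mult.assoc)
  also have "\<dots> = 1" using e1 by simp
  finally have right: "(1 + q * p) * (1 - q * u * p) = 1" .
  have "(1 - q * u * p) * (1 + q * p) = 1 + q * p - q * (u + u * p * q) * p"
    by (simp add: algebra_simps mult.assoc)
  also have "\<dots> = 1" using e2 by simp
  finally have left: "(1 - q * u * p) * (1 + q * p) = 1" .
  show ?thesis unfolding Rinv_def using right left by blast
qed

lemma Rinv_commuting_factor:
  fixes x z :: "'a::ring_1"
  assumes "x * z \<in> Rinv" and xz: "x * z = z * x"
  shows "x \<in> Rinv"
proof -
  obtain v where v1: "x * z * v = 1" and v2: "v * (x * z) = 1"
    using assms unfolding Rinv_def by blast
  have right: "x * (z * v) = 1" using v1 by (simp add: mult.assoc)
  have left: "(v * z) * x = 1" using v2 xz by (simp add: mult.assoc)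
  have "v * z = (v * z) * (x * (z * v))" using right by simp
  also have "\<dots> = ((v * z) * x) * (z * v)" by (simp add: mult.assoc)
  also have "\<dots> = z * v" using left by simp
  finally have "v * z = z * v" .
  then show ?thesis unfolding Rinv_def using right left by auto
qed

lemma one_plus_Rinv_of_one_minus_square:
  fixes x :: "'a::ring_1"
  assumes "1 - x * x \<in> Rinv"
  shows "1 + x \<in> Rinv"
proof -
  have "(1 + x) * (1 - x) = 1 - x * x" "(1 + x) * (1 - x) = (1 - x) * (1 + x)"
    by (simp_all add: algebra_simps)
  then show ?thesis using assms Rinv_commuting_factor by metis
qed

lemma comm_mult_closed:
  fixes x y z :: "'a::ring_1"
  assumes "y \<in> comm x" and "z \<in> comm x"
  shows "y * z \<in> comm x"
  using assms unfolding comm_def by (simp add: mult.assoc[symmetric]) (simp add: mult.assoc)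

lemma sandwich_in_comm:
  fixes a b c d z :: "'a::ring_1"
  assumes bdb: "b * d * b = b * a * c"
    and dbd: "d * b * d = a * c * d"
    and z: "z \<in> comm (b * d)"
  shows "d * z * b \<in> comm (a * c)"
proof -
  have zc: "b * d * z = z * (b * d)" using z unfolding comm_def by simp
  have "a * c * (d * z * b) = d * b * d * z * b"
    using dbd by (simp add: mult.assoc)
  also have "\<dots> = d * (z * (b * d)) * b" using zc by (simp add: mult.assoc)
  also have "\<dots> = d * z * (b * d * b)" by (simp add: mult.assoc)
  also have "\<dots> = d * z * b * (a * c)" using bdb by (simp add: mult.assoc)
  finally show ?thesis unfolding comm_def by simp
qed

theorem lemma2p1:
  fixes a b c d :: "'a::ring_1"
  assumes "b * d * b = b * a * c"
    and "d * b * d = a * c * d"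
    and "a * c \<in> Rqnil"
  shows "b * d \<in> Rqnil"
  unfolding Rqnil_def
proof (intro CollectI ballI)
  fix y assume y: "y \<in> comm (b * d)"
  have "- (d * (y * y) * b) \<in> comm (a * c)"
    using sandwich_in_comm[OF assms(1,2) comm_mult_closed[OF y y]]
    unfolding comm_def by simp
  then have "1 + a * c * - (d * (y * y) * b) \<in> Rinv"
    using assms(3) unfolding Rqnil_def by blast
  also have "a * c * - (d * (y * y) * b) = d * - (b * d * (y * y) * b)"
    using assms(2) by (simp add: mult.assoc[symmetric])
  finally have "1 + - (b * d * (y * y) * b) * d \<in> Rinv"
    by (rule Rinv_one_plus_mult_commute)
  also have "1 + - (b * d * (y * y) * b) * d = 1 - (b * d * y) * (b * d * y)"
    using y unfolding comm_def by (simp add: mult.assoc) (metis mult.assoc)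
  finally show "1 + b * d * y \<in> Rinv"
    by (rule one_plus_Rinv_of_one_minus_square)
qed

end
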